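(* Let $\Omega$ be a distribution of $\Sigma$, $\mathsf{Obs}$ an observation function over $\Sigma$ with $\Omega\models\mathsf{Obs}$, and $(\sigma,b)\in\Sigma^\star\times\{+,-\}$ with $\sigma\notin\mathsf{Dom}(\mathsf{Obs})$ such that, with $\mathsf{Obs}'=\mathsf{Obs}\cup\{(\sigma,b)\}$, $\Omega\not\models\mathsf{Obs}'$. Then $\mathit{CED}(\Omega,\mathsf{Obs}')\ne\emptyset$, and every $(\sigma_N,P)\in\mathit{CED}(\Omega,\mathsf{Obs}')$ has the following form: - if $b=-$: $\sigma_N=\sigma$ and $P(\Sigma_i)\in\mathsf{Dom}(\mathsf{Obs})$ for all $\Sigma_i\in\Omega$; - if $b=+$: $\sigma_N\in\mathsf{Dom}(\mathsf{Obs})$, and with $S=\{\Sigma_i\in\Omega\mid P(\Sigma_i)=\sigma\}$ we have $S\ne\emptyset$ and $P(\Sigma_i)\in\mathsf{Dom}(\mathsf{Obs})$ for all $\Sigma_i\in\Omega\setminus S$.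
   Context: $\sigma|_{\Sigma'}$ is the projection of a word onto $\Sigma'$. A distribution of $\Sigma$ is a finite set of subsets of $\Sigma$ with union $\Sigma$. An observation function is a partial map $\mathsf{Obs}:\Sigma^\star\rightharpoonup\{+,-\}$ with finite domain, identified with its set of pairs $(\sigma,\mathsf{Obs}(\sigma))$. $\Omega\models\mathsf{Obs}$ means there exist $\mathcal L_{\Sigma_i}\subseteq\Sigma_i^\star$ ($\Sigma_i\in\Omega$) such that $\mathcal L=\{w\mid\forall\Sigma_i\in\Omega.\ w|_{\Sigma_i}\in\mathcal L_{\Sigma_i}\}$ satisfies $\sigma\in\mathcal L\iff\mathsf{Obs}(\sigma)=+$ for all $\sigma\in\mathsf{Dom}(\mathsf{Obs})$. A counter-example to $\Omega\models\mathsf{Obs}$ is a pair $(\sigma_N,P)$ with $\sigma_N\in\mathsf{Dom}(\mathsf{Obs})$, $\mathsf{Obs}(\sigma_N)=-$, and $P:\Omega\to\mathsf{Dom}(\mathsf{Obs})$ with $\mathsf{Obs}(P(\Sigma_i))=+$ and $\sigma_N|_{\Sigma_i}=P(\Sigma_i)|_{\Sigma_i}$ for all $\Sigma_i\in\Omega$; $\mathit{CED}(\Omega,\mathsf{Obs})$ is the set of these. *)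

theory Defs
  imports Main "HOL-Library.FuncSet"
begin

datatype sign = Pos | Neg

definition proj :: "'a list \<Rightarrow> 'a set \<Rightarrow> 'a list" where
  "proj w S = filter (\<lambda>x. x \<in> S) w"

definition distribution :: "'a set \<Rightarrow> 'a set set \<Rightarrow> bool" where
  "distribution Sig Om \<longleftrightarrow> finite Om \<and> (\<forall>S\<in>Om. S \<subseteq> Sig) \<and> \<Union>Om = Sig"

definition observation :: "'a set \<Rightarrow> ('a list \<rightharpoonup> sign) \<Rightarrow> bool" where
  "observation Sig Obs \<longleftrightarrow> finite (dom Obs) \<and> dom Obs \<subseteq> lists Sig"

definition dist_lang :: "'a set set \<Rightarrow> ('a set \<Rightarrow> 'a list set) \<Rightarrow> 'a list set" where
  "dist_lang Om Ls = {w. \<forall>S\<in>Om. proj w S \<in> Ls S}"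

definition models :: "'a set set \<Rightarrow> ('a list \<rightharpoonup> sign) \<Rightarrow> bool" where
  "models Om Obs \<longleftrightarrow>
     (\<exists>Ls. (\<forall>S\<in>Om. Ls S \<subseteq> lists S) \<and>
           (\<forall>\<sigma>\<in>dom Obs. (\<sigma> \<in> dist_lang Om Ls \<longleftrightarrow> Obs \<sigma> = Some Pos)))"

definition CED :: "'a set set \<Rightarrow> ('a list \<rightharpoonup> sign) \<Rightarrow> ('a list \<times> ('a set \<Rightarrow> 'a list)) set" where
  "CED Om Obs = {(\<sigma>N, P). \<sigma>N \<in> dom Obs \<and> Obs \<sigma>N = Some Neg \<and>
      P \<in> extensional_funcset Om (dom Obs) \<and>
      (\<forall>S\<in>Om. Obs (P S) = Some Pos \<and> proj \<sigma>N S = proj (P S) S)}"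

end

theory Submission
  imports Defs
begin

text \<open>
  A counter-example is exactly an obstruction to \<open>\<Omega> \<Turnstile> Obs\<close>: it refutes every candidate
  family of local languages, and conversely, if the largest reasonable candidate (the projections
  of the positive samples) fails, the failure is witnessed by a counter-example. Adding a single
  sample \<open>(\<sigma>, b)\<close> to a consistent observation creates counter-examples, and each of them must
  mention \<open>\<sigma>\<close>, for otherwise it would already refute \<open>Obs\<close>. Which role \<open>\<sigma>\<close> can play is dictated
  by its sign: a negative \<open>\<sigma>\<close> can only be the refuted word, a positive one only a witness.
\<close>

lemma CED_imp_not_models:
  assumes "(\<sigma>N, P) \<in> CED \<Omega> Obs"
  shows "\<not> models \<Omega> Obs"
proof
  assume "models \<Omega> Obs"
  then obtain Ls where Ls: "\<forall>w\<in>dom Obs. w \<in> dist_lang \<Omega> Ls \<longleftrightarrow> Obs w = Some Pos"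
    unfolding models_def by blast
  from assms have neg: "\<sigma>N \<in> dom Obs" "Obs \<sigma>N = Some Neg"
    and wit: "\<forall>S\<in>\<Omega>. P S \<in> dom Obs \<and> Obs (P S) = Some Pos \<and> proj \<sigma>N S = proj (P S) S"
    unfolding CED_def by auto
  have "\<forall>S\<in>\<Omega>. proj (P S) S \<in> Ls S"
    using Ls wit unfolding dist_lang_def by blast
  with wit have "\<sigma>N \<in> dist_lang \<Omega> Ls"
    unfolding dist_lang_def by auto
  with Ls neg show False by auto
qed

lemma not_models_imp_CED:
  assumes "\<not> models \<Omega> Obs"
  shows "CED \<Omega> Obs \<noteq> {}"
proof -
  define Ls where "Ls S = {proj w S | w. Obs w = Some Pos}" for S
  have "\<forall>S\<in>\<Omega>. Ls S \<subseteq> lists S"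
    unfolding Ls_def proj_def by auto
  with assms obtain \<sigma>N where \<sigma>N: "\<sigma>N \<in> dom Obs"
    and wrong: "\<not> (\<sigma>N \<in> dist_lang \<Omega> Ls \<longleftrightarrow> Obs \<sigma>N = Some Pos)"
    unfolding models_def by blast
  have pos_in: "w \<in> dist_lang \<Omega> Ls" if "Obs w = Some Pos" for w
    using that unfolding dist_lang_def Ls_def by auto
  have neg: "Obs \<sigma>N = Some Neg"
    using \<sigma>N wrong pos_in by (metis domD sign.exhaust)
  with wrong have "\<sigma>N \<in> dist_lang \<Omega> Ls" by auto
  then have "\<forall>S\<in>\<Omega>. \<exists>w. Obs w = Some Pos \<and> proj \<sigma>N S = proj w S"
    unfolding dist_lang_def Ls_def by auto
  then obtain f where f: "\<forall>S\<in>\<Omega>. Obs (f S) = Some Pos \<and> proj \<sigma>N S = proj (f S) S"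
    by metis
  have "(\<sigma>N, restrict f \<Omega>) \<in> CED \<Omega> Obs"
    unfolding CED_def using f \<sigma>N neg by auto
  then show ?thesis by blast
qed

lemma models_iff_CED_empty: "models \<Omega> Obs \<longleftrightarrow> CED \<Omega> Obs = {}"
  using CED_imp_not_models not_models_imp_CED by fast

lemma CED_fun_upd_avoiding:
  assumes "(\<sigma>N, P) \<in> CED \<Omega> (Obs(\<sigma> \<mapsto> b))"
    and "\<sigma>N \<noteq> \<sigma>" and "\<forall>S\<in>\<Omega>. P S \<noteq> \<sigma>"
  shows "(\<sigma>N, P) \<in> CED \<Omega> Obs"
  using assms unfolding CED_def by (auto simp: PiE_def extensional_def)

theorem mainTheorem14:
  fixes Sig :: "'a set" and Om :: "'a set set" and Obs :: "'a list \<rightharpoonup> sign"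
    and \<sigma> :: "'a list" and b :: sign
  assumes "distribution Sig Om"
    and "observation Sig Obs"
    and "models Om Obs"
    and "\<sigma> \<in> lists Sig"
    and "\<sigma> \<notin> dom Obs"
    and "\<not> models Om (Obs(\<sigma> \<mapsto> b))"
  shows "CED Om (Obs(\<sigma> \<mapsto> b)) \<noteq> {} \<and>
    (\<forall>(\<sigma>N, P) \<in> CED Om (Obs(\<sigma> \<mapsto> b)).
      (b = Neg \<longrightarrow> \<sigma>N = \<sigma> \<and> (\<forall>S\<in>Om. P S \<in> dom Obs)) \<and>
      (b = Pos \<longrightarrow> \<sigma>N \<in> dom Obs \<and>
         (let T = {S \<in> Om. P S = \<sigma>} in T \<noteq> {} \<and> (\<forall>S \<in> Om - T. P S \<in> dom Obs))))"
proof (rule conjI[OF not_models_imp_CED[OF \<open>\<not> models Om (Obs(\<sigma> \<mapsto> b))\<close>]], clarify)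
  fix \<sigma>N P
  assume ce: "(\<sigma>N, P) \<in> CED Om (Obs(\<sigma> \<mapsto> b))"
  then have neg: "(Obs(\<sigma> \<mapsto> b)) \<sigma>N = Some Neg"
    and pos: "\<forall>S\<in>Om. (Obs(\<sigma> \<mapsto> b)) (P S) = Some Pos"
    unfolding CED_def by auto
  have pos_dom: "P S \<in> dom Obs" if "S \<in> Om" "P S \<noteq> \<sigma>" for S
    using pos that by (auto split: if_splits)
  have mentions_\<sigma>: "\<sigma>N = \<sigma> \<or> (\<exists>S\<in>Om. P S = \<sigma>)"
    using ce CED_fun_upd_avoiding \<open>models Om Obs\<close> models_iff_CED_empty by fast
  show "(b = Neg \<longrightarrow> \<sigma>N = \<sigma> \<and> (\<forall>S\<in>Om. P S \<in> dom Obs)) \<and>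
    (b = Pos \<longrightarrow> \<sigma>N \<in> dom Obs \<and>
      (let T = {S \<in> Om. P S = \<sigma>} in T \<noteq> {} \<and> (\<forall>S \<in> Om - T. P S \<in> dom Obs)))"
  proof (cases b)
    case Neg
    then have "\<forall>S\<in>Om. P S \<noteq> \<sigma>" using pos by auto
    then show ?thesis using Neg mentions_\<sigma> pos_dom by auto
  next
    case Pos
    then have "\<sigma>N \<noteq> \<sigma>" using neg by auto
    then show ?thesis using Pos neg mentions_\<sigma> pos_dom by (auto split: if_splits)
  qed
qed

end
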